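(* Fix a binary instance $(\mu_0,\hat q)$. There is a constant $C<\infty$, depending only on $(\mu_0,\hat q)$, with the following property. For every horizon $T\ge 2$ and every bias $\alpha^\star\in(0,1]$, the Binary Search policy satisfies $\mathrm{Reg}_T(\mathrm{BS};\alpha^\star)\le C\log T$. More precisely, suppose $\alpha^\star\ge\alpha_{\min}$, and write $\nu^\star=\nu_B(\alpha^\star)$, $L_\nu=\frac{(1-\mu_0)^2}{\hat q-\mu_0}$ and $L_W=\frac{\mu_0(1-\mu_0)^2}{\hat q-\mu_0}$. Then $$\mathrm{Reg}_T\le \lceil 2\log_2T\rceil+\frac{L_\nu(1-\alpha_{\min})}{\nu^\star}+L_W(1-\alpha_{\min}).$$ If instead $\alpha^\star<\alpha_{\min}$, the regret is $0$.
   Context: Binary model: states $\Omega=\{0,1\}$, actions $A=\{0,1\}$, prior $\mu_0=\Pr(\omega=1)\in(0,1)$, cutoff $\hat q\in(\mu_0,1)$, sender utility $u_S(a,\omega)=\mathbf 1\{a=1\}$. A receiver with fixed bias $\alpha^\star\in(0,1]$, unknown to the sender, takes action $1$ after Bayesian posterior $\nu=\Pr(\omega=1\mid s)$ iff $(1-\alpha^\star)\mu_0+\alpha^\star\nu\ge\hat q$. Define $\nu_B(\alpha)=\mu_0+(\hat q-\mu_0)/\alpha$ and $\alpha_{\min}=(\hat q-\mu_0)/(1-\mu_0)$. For $\alpha\in[\alpha_{\min},1]$, let $\tau(\alpha)$ be the Bayes-plausible scheme with mass $1-\mu_0/\nu_B(\alpha)$ on posterior $0$ and mass $\mu_0/\nu_B(\alpha)$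 on posterior $\nu_B(\alpha)$. Repeated interaction over $T$ rounds. In each round $t$: - The sender commits to a Bayes-plausible posterior distribution (a mean-$\mu_0$ distribution on $[0,1]$). - The state $\omega_t\sim\mu_0$ is drawn and a posterior $\nu_t$ is realized from the committed distribution, consistently with $\omega_t$. - The receiver acts, and the sender observes $\nu_t$ and the action. Let $\mathrm{OPT}(\alpha^\star)$ be the supremum, over Bayes-plausible distributions, of the probability that the realized posterior induces action $1$. The regret is $\mathrm{Reg}_T=T\cdot\mathrm{OPT}(\alpha^\star)-\sum_{t=1}^T\mathbb E[\Pr(\text{action }1\text{ in round }t\mid\text{history})]$. Binary Search (BS) policy: initialize $[\underline\alpha,\overline\alpha]=[\alpha_{\min},1]$, $k=0$, and $M=\lceil 2\log_2T\rceil$. While $k<M$ and rounds remain, set $m$ to the midpoint of $[\underline\alpha,\overline\alpha]$ and play $\tau(m)$. Whenever the realized posterior is nonzero: - if the receiver chooses action $1$, set $\underline\alpha\gets m$; otherwise set $\overline\alpha\gets m$; - then increment $k$. Afterwards, play $\tau(\underline\alpha)$ in all remaining rounds. *)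

theory Defs
  imports "HOL-Probability.Probability"
begin

definition acts1 :: "real \<Rightarrow> real \<Rightarrow> real \<Rightarrow> real \<Rightarrow> bool" where
  "acts1 mu0 qhat alpha nu \<longleftrightarrow> (1 - alpha) * mu0 + alpha * nu \<ge> qhat"

definition nuB :: "real \<Rightarrow> real \<Rightarrow> real \<Rightarrow> real" where
  "nuB mu0 qhat alpha = mu0 + (qhat - mu0) / alpha"

definition alpha_min :: "real \<Rightarrow> real \<Rightarrow> real" where
  "alpha_min mu0 qhat = (qhat - mu0) / (1 - mu0)"

definition bayes_plausible :: "real \<Rightarrow> real measure \<Rightarrow> bool" where
  "bayes_plausible mu0 P \<longleftrightarrow>
     prob_space P \<and> sets P = sets borel \<and>
     (AE x in P. 0 \<le> x \<and> x \<le> 1) \<and> integrable P (\<lambda>x. x) \<and> (\<integral>x. x \<partial>P) = mu0"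

definition OPT :: "real \<Rightarrow> real \<Rightarrow> real \<Rightarrow> real" where
  "OPT mu0 qhat alpha =
     Sup {measure P {nu. acts1 mu0 qhat alpha nu} | P. bayes_plausible mu0 P}"

definition tau :: "real \<Rightarrow> real \<Rightarrow> real \<Rightarrow> real pmf" where
  "tau mu0 qhat alpha =
     map_pmf (\<lambda>b. if b then nuB mu0 qhat alpha else 0)
             (bernoulli_pmf (mu0 / nuB mu0 qhat alpha))"

text \<open>State of the Binary Search policy: (lower end, upper end, counter k).\<close>
type_synonym bs_state = "real \<times> real \<times> nat"

text \<open>Parameter alpha of the scheme played in the given state (M = number of search steps).\<close>
definition bs_param :: "nat \<Rightarrow> bs_state \<Rightarrow> real" where
  "bs_param M s = (case s of (lo, hi, k) \<Rightarrow> if k < M then (lo + hi) / 2 else lo)"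

definition bs_next :: "real \<Rightarrow> real \<Rightarrow> real \<Rightarrow> nat \<Rightarrow> bs_state \<Rightarrow> real \<Rightarrow> bs_state" where
  "bs_next mu0 qhat astar M s nu = (case s of (lo, hi, k) \<Rightarrow>
     if k < M \<and> nu \<noteq> 0 then
       (let m = (lo + hi) / 2 in
        if acts1 mu0 qhat astar nu then (m, hi, Suc k) else (lo, m, Suc k))
     else s)"

text \<open>Conditional probability of action 1 in a round, given the history (summarized by the state).\<close>
definition bs_reward :: "real \<Rightarrow> real \<Rightarrow> real \<Rightarrow> nat \<Rightarrow> bs_state \<Rightarrow> real" where
  "bs_reward mu0 qhat astar M s =
     measure_pmf.prob (tau mu0 qhat (bs_param M s)) {nu. acts1 mu0 qhat astar nu}"

text \<open>Expected sum, over n remaining rounds, of the conditional probabilities of action 1,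
  starting from state s (the expectation is over realized posteriors).\<close>
primrec bs_value :: "real \<Rightarrow> real \<Rightarrow> real \<Rightarrow> nat \<Rightarrow> nat \<Rightarrow> bs_state \<Rightarrow> real" where
  "bs_value mu0 qhat astar M 0 s = 0"
| "bs_value mu0 qhat astar M (Suc n) s =
     bs_reward mu0 qhat astar M s +
     measure_pmf.expectation (tau mu0 qhat (bs_param M s))
       (\<lambda>nu. bs_value mu0 qhat astar M n (bs_next mu0 qhat astar M s nu))"

definition bs_M :: "nat \<Rightarrow> nat" where
  "bs_M T = nat \<lceil>2 * log 2 (real T)\<rceil>"

definition regret_BS :: "real \<Rightarrow> real \<Rightarrow> nat \<Rightarrow> real \<Rightarrow> real" where
  "regret_BS mu0 qhat T astar =
     real T * OPT mu0 qhat astar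
     - bs_value mu0 qhat astar (bs_M T) T (alpha_min mu0 qhat, 1, 0)"

end

theory Submission
  imports Defs
begin

text \<open>Against a bias astar \<ge> alpha_min, no Bayes-plausible scheme persuades with
  probability above mu0 / nuB(astar) (Markov's inequality), and tau(astar) attains this.
  Binary search keeps astar in [lo, hi]. From a state (lo, hi, k), the regret still to come
  is at most the potential (M - k) + L_nu (hi - lo) / nuB(astar) plus
  L_W (1 - alpha_min) / 2^M per remaining round. In a search round the loss is paid, with the
  probability of a nonzero posterior, by the drop of the potential: one unit for the search
  step and, when the midpoint lies below astar, the shrinkage of hi - lo, because nuB is
  L_nu-Lipschitz on [alpha_min, 1]. Once the M search steps are spent, tau(lo) loses at most
  L_W (hi - lo) per round because mu0 / nuB is L_W-Lipschitz there, and 2^M \<ge> T.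
  If astar < alpha_min, not even posterior 1 persuades, so OPT and the payoff both vanish.\<close>

lemma expectation_tau:
  assumes "0 \<le> mu0 / nuB mu0 qhat a" "mu0 / nuB mu0 qhat a \<le> 1"
  shows "measure_pmf.expectation (tau mu0 qhat a) g
     = mu0 / nuB mu0 qhat a * g (nuB mu0 qhat a) + (1 - mu0 / nuB mu0 qhat a) * g 0"
  unfolding tau_def using assms by simp

lemma acts1_iff_nuB_le:
  assumes "0 < a"
  shows "acts1 mu0 qhat a nu \<longleftrightarrow> nuB mu0 qhat a \<le> nu"
proof -
  have "acts1 mu0 qhat a nu \<longleftrightarrow> qhat - mu0 \<le> a * (nu - mu0)"
    unfolding acts1_def by (simp add: algebra_simps)
  also have "\<dots> \<longleftrightarrow> (qhat - mu0) / a \<le> nu - mu0"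
    using assms by (simp add: divide_le_eq mult.commute)
  finally show ?thesis unfolding nuB_def by linarith
qed

lemma nuB_le_nuB_iff:
  assumes "0 < a" "0 < b" "mu0 < qhat"
  shows "nuB mu0 qhat b \<le> nuB mu0 qhat a \<longleftrightarrow> a \<le> b"
proof -
  have "(qhat - mu0) / b \<le> (qhat - mu0) / a \<longleftrightarrow> a * (qhat - mu0) \<le> b * (qhat - mu0)"
    using assms by (simp add: field_simps)
  then show ?thesis unfolding nuB_def using assms by simp
qed

lemma bayes_plausible_return:
  assumes "0 \<le> mu0" "mu0 \<le> 1"
  shows "bayes_plausible mu0 (return borel mu0)"
proof -
  interpret prob_space "return borel mu0" by (simp add: prob_space_return)
  have "AE x in return borel mu0. norm x \<le> \<bar>mu0\<bar>"
    by (subst AE_return) simp_all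
  then have "integrable (return borel mu0) (\<lambda>x. x)"
    by (rule integrable_const_bound) simp
  moreover have "AE x in return borel mu0. 0 \<le> x \<and> x \<le> 1"
    using assms by (subst AE_return) simp_all
  moreover have "(\<integral>x. x \<partial>return borel mu0) = mu0"
    by (rule integral_return) simp_all
  ultimately show ?thesis
    unfolding bayes_plausible_def using prob_space_axioms by simp
qed

lemma space_bayes_plausible: "bayes_plausible mu0 P \<Longrightarrow> space P = UNIV"
  unfolding bayes_plausible_def using sets_eq_imp_space_eq[of P borel] by auto

lemma OPT_le:
  assumes "0 \<le> mu0" "mu0 \<le> 1" "0 < a" "0 < nuB mu0 qhat a"
  shows "OPT mu0 qhat a \<le> mu0 / nuB mu0 qhat a"
  unfolding OPT_def
proof (rule cSup_least)
  show "{measure P {nu. acts1 mu0 qhat a nu} |P. bayes_plausible mu0 P} \<noteq> {}"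
    using bayes_plausible_return[OF assms(1,2)] by blast
  fix x assume "x \<in> {measure P {nu. acts1 mu0 qhat a nu} |P. bayes_plausible mu0 P}"
  then obtain P where x: "x = measure P {nu. acts1 mu0 qhat a nu}" and P: "bayes_plausible mu0 P"
    by auto
  have int: "integrable P (\<lambda>x. x)" and mean: "(\<integral>x. x \<partial>P) = mu0"
    using P unfolding bayes_plausible_def by auto
  have "AE x in P. 0 \<le> x \<and> x \<le> 1"
    using P unfolding bayes_plausible_def by simp
  then have ae: "AE x in P. 0 \<le> x" by eventually_elim simp
  have "{nu. acts1 mu0 qhat a nu} = {x \<in> space P. nuB mu0 qhat a \<le> x}"
    using acts1_iff_nuB_le[OF assms(3)] space_bayes_plausible[OF P] by auto
  then have "x = measure P {x \<in> space P. nuB mu0 qhat a \<le> x}" using x by simp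
  also have "\<dots> \<le> (\<integral>x. x \<partial>P) / nuB mu0 qhat a"
    by (rule integral_Markov_inequality_measure[where A = "space P"]) (use int ae assms(4) in simp_all)
  finally show "x \<le> mu0 / nuB mu0 qhat a" using mean by simp
qed

lemma OPT_eq_0:
  assumes "0 \<le> mu0" "mu0 \<le> 1" "0 < a" "1 < nuB mu0 qhat a"
  shows "OPT mu0 qhat a = 0"
proof -
  have "measure P {nu. acts1 mu0 qhat a nu} = 0" if P: "bayes_plausible mu0 P" for P
  proof -
    have "AE x in P. 0 \<le> x \<and> x \<le> 1"
      using P unfolding bayes_plausible_def by simp
    then have "AE x in P. x \<notin> {nuB mu0 qhat a..}"
      by eventually_elim (use assms(4) in auto)
    moreover have "{nuB mu0 qhat a..} \<in> sets P"
      using P unfolding bayes_plausible_def by simp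
    ultimately have "{nuB mu0 qhat a..} \<in> null_sets P"
      by (simp add: AE_iff_null_sets)
    then have "measure P {nuB mu0 qhat a..} = 0"
      by (simp add: measure_def null_setsD1)
    moreover have "{nu. acts1 mu0 qhat a nu} = {nuB mu0 qhat a..}"
      using acts1_iff_nuB_le[OF assms(3)] by auto
    ultimately show ?thesis by simp
  qed
  then have "{measure P {nu. acts1 mu0 qhat a nu} |P. bayes_plausible mu0 P} = {0}"
    using bayes_plausible_return[OF assms(1,2)] by (auto intro: exI[of _ "return borel mu0"])
  then show ?thesis unfolding OPT_def by simp
qed

lemma bs_param_between:
  assumes "lo \<le> hi"
  shows "lo \<le> bs_param M (lo, hi, k)" "bs_param M (lo, hi, k) \<le> hi"
  using assms unfolding bs_param_def by auto

lemma bs_next_subinterval: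
  assumes "lo \<le> hi" "bs_next mu0 qhat astar M (lo, hi, k) nu = (l, h, j)"
  shows "lo \<le> l" "l \<le> h" "h \<le> hi"
  using assms unfolding bs_next_def Let_def by (auto split: if_splits)

lemma real_le_two_power_bs_M: "real T \<le> 2 ^ bs_M T"
proof (cases "T = 0")
  case False
  then have "0 \<le> log 2 (real T)" by simp
  then have "log 2 (real T) \<le> real (bs_M T)"
    unfolding bs_M_def using le_of_int_ceiling[of "2 * log 2 (real T)"] by linarith
  then have "2 powr log 2 (real T) \<le> 2 powr real (bs_M T)"
    by (intro powr_mono) auto
  then show ?thesis using False by (simp add: powr_realpow)
qed simp

lemma bs_M_le: "1 \<le> T \<Longrightarrow> real (bs_M T) \<le> 2 * log 2 (real T) + 1"
  unfolding bs_M_def using of_int_ceiling_le_add_one[of "2 * log 2 (real T)"] by simp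

locale binary_persuasion =
  fixes mu0 qhat :: real
  assumes mu0_pos: "0 < mu0" and mu0_less_qhat: "mu0 < qhat" and qhat_less_1: "qhat < 1"
begin

abbreviation tau_mass :: "real \<Rightarrow> real" where
  "tau_mass a \<equiv> mu0 / nuB mu0 qhat a"

abbreviation L_nu :: real where
  "L_nu \<equiv> (1 - mu0)\<^sup>2 / (qhat - mu0)"

abbreviation L_W :: real where
  "L_W \<equiv> mu0 * (1 - mu0)\<^sup>2 / (qhat - mu0)"

text \<open>The successor state after the nonzero posterior of the scheme played; the
  posterior 0 leaves the state unchanged.\<close>
definition bs_advance :: "real \<Rightarrow> nat \<Rightarrow> bs_state \<Rightarrow> bs_state" where
  "bs_advance astar M s = bs_next mu0 qhat astar M s (nuB mu0 qhat (bs_param M s))"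

lemma alpha_min_pos: "0 < alpha_min mu0 qhat"
  and alpha_min_less_1: "alpha_min mu0 qhat < 1"
  using mu0_pos mu0_less_qhat qhat_less_1 unfolding alpha_min_def by (auto simp: field_simps)

lemma L_nu_pos: "0 < L_nu" and L_W_pos: "0 < L_W"
  using mu0_pos mu0_less_qhat qhat_less_1 by auto

lemma qhat_le_nuB:
  assumes "0 < a" "a \<le> 1"
  shows "qhat \<le> nuB mu0 qhat a"
proof -
  have "(qhat - mu0) * a \<le> qhat - mu0"
    using assms mu0_less_qhat by (simp add: mult_left_le)
  then have "qhat - mu0 \<le> (qhat - mu0) / a"
    using assms by (simp add: le_divide_eq)
  then show ?thesis unfolding nuB_def by linarith
qed

lemma nuB_pos: "0 < a \<Longrightarrow> 0 < nuB mu0 qhat a"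
  unfolding nuB_def using mu0_pos mu0_less_qhat by (simp add: add_pos_nonneg)

lemma tau_mass_pos: "0 < a \<Longrightarrow> a \<le> 1 \<Longrightarrow> 0 < tau_mass a"
  and tau_mass_le_1: "0 < a \<Longrightarrow> a \<le> 1 \<Longrightarrow> tau_mass a \<le> 1"
  using qhat_le_nuB[of a] mu0_pos mu0_less_qhat by auto

lemma one_less_nuB:
  assumes "0 < a" "a < alpha_min mu0 qhat"
  shows "1 < nuB mu0 qhat a"
proof -
  have "(qhat - mu0) / alpha_min mu0 qhat < (qhat - mu0) / a"
    using assms alpha_min_pos mu0_less_qhat by (intro divide_strict_left_mono) auto
  moreover have "(qhat - mu0) / alpha_min mu0 qhat = 1 - mu0"
    unfolding alpha_min_def using mu0_less_qhat qhat_less_1 by simp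
  ultimately show ?thesis unfolding nuB_def by simp
qed

lemma acts1_nuB_iff:
  assumes "0 < a" "0 < b"
  shows "acts1 mu0 qhat b (nuB mu0 qhat a) \<longleftrightarrow> a \<le> b"
  using acts1_iff_nuB_le[OF assms(2)] nuB_le_nuB_iff[OF assms mu0_less_qhat] by simp

lemma not_acts1_0:
  assumes "0 < b" "b \<le> 1"
  shows "\<not> acts1 mu0 qhat b 0"
  using acts1_iff_nuB_le[OF assms(1)] qhat_le_nuB[OF assms] mu0_pos mu0_less_qhat by simp

lemma bs_reward_eq:
  assumes "0 < astar" "astar \<le> 1" "0 < bs_param M s" "bs_param M s \<le> 1"
  shows "bs_reward mu0 qhat astar M s
    = (if bs_param M s \<le> astar then tau_mass (bs_param M s) else 0)"
proof -
  let ?a = "bs_param M s"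
  have "bs_reward mu0 qhat astar M s
      = measure_pmf.expectation (tau mu0 qhat ?a) (indicator {nu. acts1 mu0 qhat astar nu})"
    unfolding bs_reward_def by simp
  also have "\<dots> = (if ?a \<le> astar then tau_mass ?a else 0)"
    using assms tau_mass_pos[of ?a] tau_mass_le_1[of ?a]
    by (subst expectation_tau) (auto simp: indicator_def acts1_nuB_iff not_acts1_0)
  finally show ?thesis .
qed

lemma bs_value_Suc_eq:
  assumes "0 < bs_param M s" "bs_param M s \<le> 1"
  shows "bs_value mu0 qhat astar M (Suc n) s
    = bs_reward mu0 qhat astar M s
      + tau_mass (bs_param M s) * bs_value mu0 qhat astar M n (bs_advance astar M s)
      + (1 - tau_mass (bs_param M s)) * bs_value mu0 qhat astar M n s"
proof -
  have "bs_next mu0 qhat astar M s 0 = s"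
    unfolding bs_next_def by (simp split: prod.split)
  then show ?thesis
    using assms tau_mass_pos tau_mass_le_1
    by (simp add: expectation_tau bs_advance_def less_imp_le)
qed

lemma div_alpha_min_sq: "(qhat - mu0) / (alpha_min mu0 qhat)\<^sup>2 = L_nu"
proof -
  have "c / (c / d)\<^sup>2 = d\<^sup>2 / c" if "c \<noteq> 0" "d \<noteq> 0" for c d :: real
    using that by (simp add: power_divide power2_eq_square)
  then show ?thesis
    unfolding alpha_min_def using mu0_less_qhat qhat_less_1 by simp
qed

lemma tau_mass_mono:
  assumes "0 < a" "a \<le> b"
  shows "tau_mass a \<le> tau_mass b"
  using assms nuB_le_nuB_iff[OF assms(1) _ mu0_less_qhat, of b] nuB_pos[of b] mu0_pos
  by (intro divide_left_mono) auto

lemma nuB_diff_le: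
  assumes "alpha_min mu0 qhat \<le> a" "a \<le> b"
  shows "nuB mu0 qhat a - nuB mu0 qhat b \<le> L_nu * (b - a)"
proof -
  define am c where "am = alpha_min mu0 qhat" and "c = qhat - mu0"
  have am: "0 < am" and c: "0 < c" and a: "0 < a"
    using alpha_min_pos mu0_less_qhat assms unfolding am_def c_def by auto
  have "nuB mu0 qhat a - nuB mu0 qhat b = c / (a * b) * (b - a)"
    unfolding nuB_def c_def using a assms by (simp add: field_simps)
  also have "\<dots> \<le> c / am\<^sup>2 * (b - a)"
    using assms am c unfolding am_def[symmetric] power2_eq_square
    by (intro mult_right_mono divide_left_mono mult_mono mult_pos_pos) auto
  also have "\<dots> = L_nu * (b - a)"
    using div_alpha_min_sq unfolding am_def c_def by simp
  finally show ?thesis .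
qed

lemma tau_mass_gap_le:
  assumes "alpha_min mu0 qhat \<le> a" "a \<le> b"
  shows "tau_mass b - tau_mass a \<le> tau_mass a * (L_nu * (b - a) / nuB mu0 qhat b)"
proof -
  have a: "0 < a" and b: "0 < b" using alpha_min_pos assms by auto
  have "tau_mass b - tau_mass a = tau_mass a * ((nuB mu0 qhat a - nuB mu0 qhat b) / nuB mu0 qhat b)"
    using nuB_pos[OF a] nuB_pos[OF b] by (simp add: field_simps)
  also have "\<dots> \<le> tau_mass a * (L_nu * (b - a) / nuB mu0 qhat b)"
    using nuB_diff_le[OF assms] nuB_pos[OF a] nuB_pos[OF b] mu0_pos
    by (intro mult_left_mono divide_right_mono) auto
  finally show ?thesis .
qed

lemma tau_mass_diff_le:
  assumes "alpha_min mu0 qhat \<le> a" "a \<le> b"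
  shows "tau_mass b - tau_mass a \<le> L_W * (b - a)"
proof -
  define am c where "am = alpha_min mu0 qhat" and "c = qhat - mu0"
  have am: "0 < am" and c: "0 < c"
    using alpha_min_pos mu0_less_qhat unfolding am_def c_def by auto
  have am_eq: "mu0 * am + c = am"
    unfolding am_def alpha_min_def c_def using mu0_less_qhat qhat_less_1 by (simp add: field_simps)
  have den: "am \<le> mu0 * x + c" if "am \<le> x" for x
    using am_eq mult_left_mono[OF that, of mu0] mu0_pos by linarith
  have tau_mass_eq: "tau_mass x = mu0 * x / (mu0 * x + c)" if "0 < x" for x
    using that unfolding nuB_def c_def by (simp add: field_simps)
  have "tau_mass b - tau_mass a = mu0 * (c / ((mu0 * b + c) * (mu0 * a + c)) * (b - a))"
    using am assms den[of a] den[of b] unfolding am_def[symmetric]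
    by (simp add: tau_mass_eq field_simps)
  also have "\<dots> \<le> mu0 * (c / am\<^sup>2 * (b - a))"
    using assms am c mu0_pos den[of a] den[of b] unfolding am_def[symmetric] power2_eq_square
    by (intro mult_left_mono mult_right_mono divide_left_mono mult_mono mult_pos_pos) auto
  also have "\<dots> = L_W * (b - a)"
    using div_alpha_min_sq unfolding am_def c_def by simp
  finally show ?thesis .
qed

lemma bs_advance_exploit: "\<not> k < M \<Longrightarrow> bs_advance astar M (lo, hi, k) = (lo, hi, k)"
  unfolding bs_advance_def bs_next_def by simp

lemma bs_value_eq_0:
  assumes "0 < astar" "astar < alpha_min mu0 qhat"
    and "alpha_min mu0 qhat \<le> lo" "lo \<le> hi" "hi \<le> 1"
  shows "bs_value mu0 qhat astar M n (lo, hi, k) = 0"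
  using assms(3-)
proof (induction n arbitrary: lo hi k)
  case 0
  show ?case by simp
next
  case (Suc n)
  let ?a = "bs_param M (lo, hi, k)"
  have a: "alpha_min mu0 qhat \<le> ?a" "?a \<le> 1"
    using bs_param_between[of lo hi M k] Suc.prems by auto
  then have a_pos: "0 < ?a" using alpha_min_pos by linarith
  obtain l h j where adv: "bs_advance astar M (lo, hi, k) = (l, h, j)"
    by (cases "bs_advance astar M (lo, hi, k)") auto
  have "bs_value mu0 qhat astar M n (l, h, j) = 0"
    using Suc.prems bs_next_subinterval[OF Suc.prems(2) adv[unfolded bs_advance_def]]
    by (intro Suc.IH) auto
  moreover have "bs_reward mu0 qhat astar M (lo, hi, k) = 0"
    using bs_reward_eq[OF assms(1) _ a_pos a(2)] assms a alpha_min_less_1 by simp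
  ultimately show ?case
    using bs_value_Suc_eq[OF a_pos a(2)] Suc.IH[OF Suc.prems] adv by simp
qed

end

locale bs_search = binary_persuasion +
  fixes astar :: real and M :: nat
  assumes alpha_min_le_astar: "alpha_min mu0 qhat \<le> astar" and astar_le_1: "astar \<le> 1"
begin

lemma astar_pos: "0 < astar"
  using alpha_min_pos alpha_min_le_astar by linarith

definition search_invariant :: "bs_state \<Rightarrow> bool" where
  "search_invariant s \<longleftrightarrow> (case s of (lo, hi, k) \<Rightarrow>
     alpha_min mu0 qhat \<le> lo \<and> lo \<le> astar \<and> astar \<le> hi \<and> hi \<le> 1 \<and> k \<le> M \<and>
     hi - lo = (1 - alpha_min mu0 qhat) / 2 ^ k)"

definition potential :: "bs_state \<Rightarrow> real" where
  "potential s = (case s of (lo, hi, k) \<Rightarrow>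
     real (M - k) + L_nu * (hi - lo) / nuB mu0 qhat astar)"

lemma potential_nonneg: "search_invariant s \<Longrightarrow> 0 \<le> potential s"
  using nuB_pos[OF astar_pos] mu0_less_qhat alpha_min_less_1
  unfolding search_invariant_def potential_def by (auto split: prod.splits)

lemma bs_advance_search:
  assumes "search_invariant (lo, hi, k)" "k < M"
  shows "bs_advance astar M (lo, hi, k)
    = (if (lo + hi) / 2 \<le> astar then ((lo + hi) / 2, hi, Suc k) else (lo, (lo + hi) / 2, Suc k))"
proof -
  let ?m = "(lo + hi) / 2"
  have "0 < ?m" "?m \<le> 1"
    using assms alpha_min_pos unfolding search_invariant_def by auto
  then have "nuB mu0 qhat ?m \<noteq> 0" and "acts1 mu0 qhat astar (nuB mu0 qhat ?m) \<longleftrightarrow> ?m \<le> astar"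
    using qhat_le_nuB[of ?m] mu0_pos mu0_less_qhat acts1_nuB_iff[OF _ astar_pos] by force+
  then show ?thesis
    using assms(2) unfolding bs_advance_def bs_next_def bs_param_def Let_def by simp
qed

lemma search_invariant_advance:
  assumes "search_invariant s"
  shows "search_invariant (bs_advance astar M s)"
proof -
  obtain lo hi k where s: "s = (lo, hi, k)" by (cases s) auto
  have halves: "hi - (lo + hi) / 2 = (hi - lo) / 2" "(lo + hi) / 2 - lo = (hi - lo) / 2"
    by (simp_all add: field_simps)
  show ?thesis
  proof (cases "k < M")
    case True
    then show ?thesis
      using assms halves unfolding s bs_advance_search[OF assms[unfolded s] True]
      by (auto simp: search_invariant_def)
  next
    case False
    then show ?thesis using assms unfolding s by (simp add: bs_advance_exploit)
  qed
qed

lemma potential_drop_search: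
  assumes "search_invariant (lo, hi, k)" "k < M"
  shows "potential (lo, hi, k) - potential (bs_advance astar M (lo, hi, k))
    = 1 + L_nu * (if (lo + hi) / 2 \<le> astar then (lo + hi) / 2 - lo else hi - (lo + hi) / 2)
          / nuB mu0 qhat astar"
proof -
  have step: "potential (lo, hi, k) - potential (l, h, Suc k)
      = 1 + L_nu * ((hi - lo) - (h - l)) / nuB mu0 qhat astar" for l h
  proof -
    have "real (M - k) = real (M - Suc k) + 1" using assms(2) by simp
    then show ?thesis
      unfolding potential_def by (simp add: right_diff_distrib diff_divide_distrib)
  qed
  have halves: "(hi - lo) - (hi - (lo + hi) / 2) = (lo + hi) / 2 - lo"
    "(hi - lo) - ((lo + hi) / 2 - lo) = hi - (lo + hi) / 2"
    by (simp_all add: field_simps)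
  show ?thesis
    by (cases "(lo + hi) / 2 \<le> astar")
      (simp_all only: bs_advance_search[OF assms] if_True if_False step halves)
qed

lemma search_up_loss_le:
  assumes "search_invariant (lo, hi, k)" "(lo + hi) / 2 \<le> astar"
  shows "tau_mass astar - tau_mass ((lo + hi) / 2)
    \<le> tau_mass ((lo + hi) / 2) * (L_nu * ((lo + hi) / 2 - lo) / nuB mu0 qhat astar)"
proof -
  let ?m = "(lo + hi) / 2"
  have lo: "alpha_min mu0 qhat \<le> lo" and hi: "astar \<le> hi" "hi \<le> 1"
    using assms(1) unfolding search_invariant_def by auto
  have m: "0 < ?m" "?m \<le> 1"
    using lo hi alpha_min_pos assms(2) astar_le_1 by (auto simp: field_simps)
  have "tau_mass astar - tau_mass ?m \<le> tau_mass ?m * (L_nu * (astar - ?m) / nuB mu0 qhat astar)"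
    using tau_mass_gap_le[of ?m astar] assms(2) lo hi by simp
  also have "\<dots> \<le> tau_mass ?m * (L_nu * (?m - lo) / nuB mu0 qhat astar)"
    using tau_mass_pos[OF m] L_nu_pos nuB_pos[OF astar_pos] hi
    by (intro mult_left_mono divide_right_mono) (simp_all add: field_simps)
  finally show ?thesis .
qed

lemma exploit_loss_le:
  assumes "search_invariant (lo, hi, k)" "\<not> k < M"
  shows "tau_mass astar - tau_mass lo \<le> L_W * (1 - alpha_min mu0 qhat) / 2 ^ M"
proof -
  have lo: "alpha_min mu0 qhat \<le> lo" "lo \<le> astar" and hi: "astar \<le> hi"
    and "hi - lo = (1 - alpha_min mu0 qhat) / 2 ^ M"
    using assms unfolding search_invariant_def by auto
  have "tau_mass astar - tau_mass lo \<le> L_W * (astar - lo)"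
    using tau_mass_diff_le lo by simp
  also have "\<dots> \<le> L_W * (hi - lo)"
    using L_W_pos hi by (intro mult_left_mono) auto
  finally show ?thesis using \<open>hi - lo = _\<close> by simp
qed

lemma potential_drift:
  assumes inv: "search_invariant (lo, hi, k)"
  shows "tau_mass astar - bs_reward mu0 qhat astar M (lo, hi, k)
    \<le> tau_mass (bs_param M (lo, hi, k))
        * (potential (lo, hi, k) - potential (bs_advance astar M (lo, hi, k)))
      + L_W * (1 - alpha_min mu0 qhat) / 2 ^ M"
    (is "tau_mass astar - ?r \<le> tau_mass ?a * ?drop + ?E")
proof -
  let ?m = "(lo + hi) / 2"
  have lo: "alpha_min mu0 qhat \<le> lo" "lo \<le> astar" and hi: "astar \<le> hi" "hi \<le> 1"
    using inv unfolding search_invariant_def by auto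
  have a: "0 < ?a" "?a \<le> 1"
    using bs_param_between[of lo hi M k] lo hi alpha_min_pos by auto
  have E: "0 \<le> ?E"
    using mu0_pos mu0_less_qhat alpha_min_less_1 by (intro divide_nonneg_pos mult_nonneg_nonneg) auto
  have reward: "?r = (if ?a \<le> astar then tau_mass ?a else 0)"
    using bs_reward_eq[OF astar_pos astar_le_1 a] .
  consider (up) "k < M" "?m \<le> astar" | (down) "k < M" "\<not> ?m \<le> astar" | (exploit) "\<not> k < M"
    by blast
  then show ?thesis
  proof cases
    case up
    have a_m: "?a = ?m" using up(1) unfolding bs_param_def by simp
    have "?r = tau_mass ?m" using reward up(2) unfolding a_m by simp
    then show ?thesis
      using search_up_loss_le[OF inv up(2)] tau_mass_pos[OF a, unfolded a_m] E
      unfolding potential_drop_search[OF inv up(1)] a_m if_P[OF up(2)] distrib_left mult_1_right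
      by linarith
  next
    case down
    have a_m: "?a = ?m" using down(1) unfolding bs_param_def by simp
    have upper_half: "0 \<le> hi - ?m" using lo hi by (simp add: field_simps)
    have "?r = 0" using reward down(2) unfolding a_m by simp
    moreover have "0 \<le> tau_mass ?m * (L_nu * (hi - ?m) / nuB mu0 qhat astar)"
      using upper_half tau_mass_pos[OF a, unfolded a_m] L_nu_pos nuB_pos[OF astar_pos]
      by (metis divide_nonneg_pos less_imp_le mult_nonneg_nonneg)
    moreover have "tau_mass astar \<le> tau_mass ?m"
      using tau_mass_mono[OF astar_pos] down(2) by simp
    ultimately show ?thesis
      using E
      unfolding potential_drop_search[OF inv down(1)] a_m if_not_P[OF down(2)] distrib_left
        mult_1_right
      by linarith
  next
    case exploit
    have "?a = lo" using exploit unfolding bs_param_def by simp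
    then have "?r = tau_mass lo" using reward lo(2) by simp
    then show ?thesis
      using exploit_loss_le[OF inv exploit]
      unfolding bs_advance_exploit[OF exploit] \<open>?a = lo\<close> by simp
  qed
qed

lemma loss_to_go_le:
  assumes "search_invariant s"
  shows "real n * tau_mass astar - bs_value mu0 qhat astar M n s
    \<le> potential s + real n * (L_W * (1 - alpha_min mu0 qhat) / 2 ^ M)"
  using assms
proof (induction n arbitrary: s)
  case 0
  then show ?case using potential_nonneg by simp
next
  case (Suc n)
  obtain lo hi k where s: "s = (lo, hi, k)" by (cases s) auto
  define a p ps V E where "a = bs_param M s" and "p = tau_mass a" and "ps = tau_mass astar"
    and "V = bs_value mu0 qhat astar M n" and "E = L_W * (1 - alpha_min mu0 qhat) / 2 ^ M"
  define s' where "s' = bs_advance astar M s"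
  have a: "0 < a" "a \<le> 1"
    using Suc.prems bs_param_between[of lo hi M k] alpha_min_pos
    unfolding s a_def search_invariant_def by auto
  have p: "0 \<le> p" "p \<le> 1" using tau_mass_pos[OF a] tau_mass_le_1[OF a] unfolding p_def by auto
  have "p * (real n * ps - V s') \<le> p * (potential s' + real n * E)"
    using Suc.IH[OF search_invariant_advance[OF Suc.prems]] p
    unfolding s'_def V_def E_def ps_def by (intro mult_left_mono) auto
  moreover have "(1 - p) * (real n * ps - V s) \<le> (1 - p) * (potential s + real n * E)"
    using Suc.IH[OF Suc.prems] p unfolding V_def E_def ps_def by (intro mult_left_mono) auto
  moreover have "ps - bs_reward mu0 qhat astar M s \<le> p * (potential s - potential s') + E"
    using potential_drift Suc.prems unfolding s p_def a_def s'_def E_def ps_def by simp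
  moreover have "bs_value mu0 qhat astar M (Suc n) s
      = bs_reward mu0 qhat astar M s + p * V s' + (1 - p) * V s"
    using bs_value_Suc_eq a unfolding a_def p_def V_def s'_def by simp
  ultimately have "real (Suc n) * ps - bs_value mu0 qhat astar M (Suc n) s
      \<le> potential s + real (Suc n) * E"
    by (simp add: algebra_simps)
  then show ?case unfolding ps_def E_def .
qed

end

context binary_persuasion
begin

lemma regret_BS_le:
  assumes "alpha_min mu0 qhat \<le> astar" "astar \<le> 1"
  shows "regret_BS mu0 qhat T astar
    \<le> real (bs_M T) + L_nu * (1 - alpha_min mu0 qhat) / nuB mu0 qhat astar
       + L_W * (1 - alpha_min mu0 qhat)"
proof -
  interpret bs_search mu0 qhat astar "bs_M T"
    using assms by unfold_locales
  define W where "W = L_W * (1 - alpha_min mu0 qhat)"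
  have "W \<ge> 0"
    using mu0_pos mu0_less_qhat alpha_min_less_1 unfolding W_def
    by (intro mult_nonneg_nonneg divide_nonneg_pos) auto
  moreover have "real T / 2 ^ bs_M T \<le> 1"
    using real_le_two_power_bs_M[of T] by simp
  ultimately have exploit: "real T * (W / 2 ^ bs_M T) \<le> W"
    using mult_right_mono[of "real T / 2 ^ bs_M T" 1 W] by simp
  have "search_invariant (alpha_min mu0 qhat, 1, 0)"
    unfolding search_invariant_def using assms by simp
  from loss_to_go_le[OF this, of T]
  have "real T * tau_mass astar - bs_value mu0 qhat astar (bs_M T) T (alpha_min mu0 qhat, 1, 0)
      \<le> real (bs_M T) + L_nu * (1 - alpha_min mu0 qhat) / nuB mu0 qhat astar + W"
    using exploit unfolding potential_def W_def by simp
  moreover have "real T * OPT mu0 qhat astar \<le> real T * tau_mass astar"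
    using OPT_le[of mu0 astar qhat] mu0_pos mu0_less_qhat qhat_less_1 astar_pos nuB_pos[OF astar_pos]
    by (intro mult_left_mono) auto
  ultimately show ?thesis unfolding regret_BS_def W_def by linarith
qed

lemma regret_BS_eq_0:
  assumes "0 < astar" "astar < alpha_min mu0 qhat"
  shows "regret_BS mu0 qhat T astar = 0"
proof -
  have "OPT mu0 qhat astar = 0"
    using OPT_eq_0 one_less_nuB[OF assms] assms mu0_pos mu0_less_qhat qhat_less_1 by simp
  moreover have "bs_value mu0 qhat astar (bs_M T) T (alpha_min mu0 qhat, 1, 0) = 0"
    using bs_value_eq_0[OF assms] alpha_min_less_1 by simp
  ultimately show ?thesis unfolding regret_BS_def by simp
qed

lemma regret_BS_le_log:
  assumes "2 \<le> T" "0 < astar" "astar \<le> 1"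
  shows "regret_BS mu0 qhat T astar
    \<le> (3 + L_nu * (1 - alpha_min mu0 qhat) / qhat + L_W * (1 - alpha_min mu0 qhat)) / ln 2
       * ln (real T)"
proof -
  define K where "K = L_nu * (1 - alpha_min mu0 qhat) / qhat + L_W * (1 - alpha_min mu0 qhat)"
  have K: "0 \<le> K"
    using mu0_pos mu0_less_qhat alpha_min_less_1 unfolding K_def
    by (intro add_nonneg_nonneg mult_nonneg_nonneg divide_nonneg_pos) auto
  have log_T: "1 \<le> log 2 (real T)" using assms(1) by simp
  have "regret_BS mu0 qhat T astar \<le> 2 * log 2 (real T) + 1 + K"
  proof (cases "alpha_min mu0 qhat \<le> astar")
    case True
    have "L_nu * (1 - alpha_min mu0 qhat) / nuB mu0 qhat astar
        \<le> L_nu * (1 - alpha_min mu0 qhat) / qhat"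
      using qhat_le_nuB[OF assms(2,3)] L_nu_pos alpha_min_less_1 mu0_pos mu0_less_qhat
      by (intro divide_left_mono mult_nonneg_nonneg) auto
    then show ?thesis
      using regret_BS_le[OF True assms(3), of T] bs_M_le[of T] assms(1) unfolding K_def by simp
  next
    case False
    then show ?thesis using regret_BS_eq_0[OF assms(2)] log_T K by simp
  qed
  also have "\<dots> \<le> (3 + K) * log 2 (real T)"
    using mult_left_mono[OF log_T, of "1 + K"] K by (simp add: algebra_simps)
  finally show ?thesis unfolding K_def log_def by (simp add: add.assoc)
qed

end

theorem proposition3p1:
  fixes mu0 qhat :: real
  assumes "0 < mu0" and "mu0 < qhat" and "qhat < 1"
  shows "(\<exists>C::real. \<forall>T::nat. \<forall>astar::real. T \<ge> 2 \<longrightarrow> 0 < astar \<longrightarrow> astar \<le> 1 \<longrightarrow>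
            regret_BS mu0 qhat T astar \<le> C * ln (real T))
       \<and> (\<forall>T::nat. \<forall>astar::real. T \<ge> 2 \<longrightarrow> alpha_min mu0 qhat \<le> astar \<longrightarrow> astar \<le> 1 \<longrightarrow>
            regret_BS mu0 qhat T astar
              \<le> real (nat \<lceil>2 * log 2 (real T)\<rceil>)
                 + ((1 - mu0)\<^sup>2 / (qhat - mu0)) * (1 - alpha_min mu0 qhat) / nuB mu0 qhat astar
                 + (mu0 * (1 - mu0)\<^sup>2 / (qhat - mu0)) * (1 - alpha_min mu0 qhat))
       \<and> (\<forall>T::nat. \<forall>astar::real. T \<ge> 2 \<longrightarrow> 0 < astar \<longrightarrow> astar < alpha_min mu0 qhat \<longrightarrow>
            regret_BS mu0 qhat T astar = 0)"
proof -
  interpret binary_persuasion mu0 qhat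
    using assms by unfold_locales
  show ?thesis
    using regret_BS_le_log regret_BS_le[unfolded bs_M_def] regret_BS_eq_0 by blast
qed

end
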